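(* Consider any run of TruVaR (defined in the context), in BO or LSE mode, under the Submodularity Assumption. Let $t\ge1$ be such that the epoch index in effect when $x_t$ is chosen and when $x_{t+1}$ is chosen is the same value $i$ (i.e. the while-loop at the end of step $t$ does not increment $i$). For $s\in\{t,t+1\}$ define, for finite multisets $S$ of points of $D$, $$g_s(S)=\sum_{\bar x\in M_{s-1}}\max\Big\{\sigma^2_{s-1}(\bar x),\tfrac{\eta_{(i)}^2}{\beta_{(i)}}\Big\}-\sum_{\bar x\in M_{s-1}}\max\Big\{\sigma^2_{s-1|S}(\bar x),\tfrac{\eta_{(i)}^2}{\beta_{(i)}}\Big\},\qquad g_{s,\max}=\sum_{\bar x\in M_{s-1}}\max\Big\{0,\ \sigma^2_{s-1}(\bar x)-\tfrac{\eta_{(i)}^2}{\beta_{(i)}}\Big\}.$$ Suppose $g_{t,\max}>0$ and let $S_t^*$ be a multiset of minimum cost $c(S)$ among those with $g_t(S)=g_{t,\max}$. Then $$g_{t+1,\max}\ \le\ \Big(1-\frac{c(x_t)}{c(S_t^* )}\Big)\,g_{t,\max}.$$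
   Context: Setting. $D$ is a finite set. The unknown function $f:D\to\mathbb R$ is a sample from a zero-mean Gaussian process with known kernel $k$ satisfying $k(x,x)=1$ for all $x\in D$. There is a known noise-variance function $\sigma^2(\cdot):D\to(0,\infty)$ and a known cost function $c:D\to(0,\infty)$. At step $t$ the algorithm queries $x_t\in D$ and observes $y_t=f(x_t)+z_t$ with $z_t\sim N(0,\sigma^2(x_t))$ independent of everything else. Posterior after $t$ steps: $\mu_t(x)=\mathbf k_t(x)^T(\mathbf K_t+\Sigma_t)^{-1}\mathbf y_t$ and $\sigma_t^2(x)=k(x,x)-\mathbf k_t(x)^T(\mathbf K_t+\Sigma_t)^{-1}\mathbf k_t(x)$, where $\mathbf k_t(x)=[k(x_j,x)]_{j=1}^t$, $\mathbf K_t=[k(x_j,x_{j'})]_{j,j'=1}^t$, $\Sigma_t=\mathrm{diag}(\sigma^2(x_1),\dots,\sigma^2(x_t))$, $\mathbf y_t=(y_1,\dots,y_t)^T$. For a finite multiset $S$ of points of $D$, $\sigma^2_{t|S}(\bar x)$ is the posterior variance of $f(\bar x)$ given noisy observations at $x_1,\dots,x_t$ and additionally at every point of $S$ (with multiplicity); $\sigma_{t|x}:=\sigma_{t|\{x\}}$; $c(S)=\sum_{x\in S}c(x)$ counted with multiplicity. Algorithm TruVaR. Parameters: $\bar\delta>0$, $r\in(0,1)$, $\eta_{(1)}>0$, a sequence $\beta_{(1)},\beta_{(2)},\dots>0$, and in LSE mode a threshold $h\in\mathbb R$. Initialize epoch index $i=1$, $M_0=D$, and (LSE) $H_0=L_0=\emptyset$.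 For $t=1,2,\dots$: (1) choose $x_t\in\arg\max_{x\in D}\frac{1}{c(x)}\Big[\sum_{\bar x\in M_{t-1}}\max\{\beta_{(i)}\sigma^2_{t-1}(\bar x),\eta_{(i)}^2\}-\sum_{\bar x\in M_{t-1}}\max\{\beta_{(i)}\sigma^2_{t-1|x}(\bar x),\eta_{(i)}^2\}\Big]$; (2) observe $y_t$, compute $\mu_t,\sigma_t$, and set $u_t=\mu_t+\beta_{(i)}^{1/2}\sigma_t$, $\ell_t=\mu_t-\beta_{(i)}^{1/2}\sigma_t$ (current $i$). In BO mode set $M_t=\{x\in M_{t-1}: u_t(x)\ge\max_{\bar x\in M_{t-1}}\ell_t(\bar x)\}$. In LSE mode set $M_t=\{x\in M_{t-1}: u_t(x)\ge h\text{ and }\ell_t(x)\le h\}$, $H_t=H_{t-1}\cup\{x\in M_{t-1}:\ell_t(x)>h\}$, $L_t=L_{t-1}\cup\{x\in M_{t-1}:u_t(x)<h\}$; (3) while $\max_{x\in M_t}\beta_{(i)}^{1/2}\sigma_t(x)\le(1+\bar\delta)\eta_{(i)}$: increment $i$ and set $\eta_{(i)}=r\,\eta_{(i-1)}$. Submodularity Assumption: for every $t\ge0$, every choice of previously selected points $x_1,\dots,x_t$, and every $x\in D$, the set function $S\mapsto\sigma_t^2(x)-\sigma^2_{t|S}(x)$ (on finite multisets of $D$) is submodular. *)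

theory Defs
  imports "Jordan_Normal_Form.Gauss_Jordan_Elimination" "HOL-Library.Multiset"
begin

definition kvec :: "('a \<Rightarrow> 'a \<Rightarrow> real) \<Rightarrow> 'a list \<Rightarrow> 'a \<Rightarrow> real vec" where
  "kvec k xs x = vec (length xs) (\<lambda>j. k (xs ! j) x)"

definition gram_noise :: "('a \<Rightarrow> 'a \<Rightarrow> real) \<Rightarrow> ('a \<Rightarrow> real) \<Rightarrow> 'a list \<Rightarrow> real mat" where
  "gram_noise k s2 xs = mat (length xs) (length xs)
     (\<lambda>(j, j'). k (xs ! j) (xs ! j') + (if j = j' then s2 (xs ! j) else 0))"

definition post_mean :: "('a \<Rightarrow> 'a \<Rightarrow> real) \<Rightarrow> ('a \<Rightarrow> real) \<Rightarrow> 'a list \<Rightarrow> real list \<Rightarrow> 'a \<Rightarrow> real" where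
  "post_mean k s2 xs ys x =
     kvec k xs x \<bullet> (the (mat_inverse (gram_noise k s2 xs)) *\<^sub>v vec_of_list ys)"

definition post_var :: "('a \<Rightarrow> 'a \<Rightarrow> real) \<Rightarrow> ('a \<Rightarrow> real) \<Rightarrow> 'a list \<Rightarrow> 'a \<Rightarrow> real" where
  "post_var k s2 xs x =
     k x x - kvec k xs x \<bullet> (the (mat_inverse (gram_noise k s2 xs)) *\<^sub>v kvec k xs x)"

text \<open>Posterior variance given xs and additionally every point of the multiset S
  (the order in which S is appended is irrelevant mathematically).\<close>
definition post_var_ms :: "('a \<Rightarrow> 'a \<Rightarrow> real) \<Rightarrow> ('a \<Rightarrow> real) \<Rightarrow> 'a list \<Rightarrow> 'a multiset \<Rightarrow> 'a \<Rightarrow> real" where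
  "post_var_ms k s2 xs S x = post_var k s2 (xs @ (SOME ys. mset ys = S)) x"

definition mcost :: "('a \<Rightarrow> real) \<Rightarrow> 'a multiset \<Rightarrow> real" where
  "mcost c S = sum_mset (image_mset c S)"

definition psd_kernel_on :: "'a set \<Rightarrow> ('a \<Rightarrow> 'a \<Rightarrow> real) \<Rightarrow> bool" where
  "psd_kernel_on D k \<longleftrightarrow> (\<forall>x\<in>D. \<forall>y\<in>D. k x y = k y x) \<and>
     (\<forall>xs (v :: nat \<Rightarrow> real). set xs \<subseteq> D \<longrightarrow>
        0 \<le> (\<Sum>i<length xs. \<Sum>j<length xs. v i * v j * k (xs ! i) (xs ! j)))"

definition submodular_ms :: "'a set \<Rightarrow> ('a multiset \<Rightarrow> real) \<Rightarrow> bool" where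
  "submodular_ms D F \<longleftrightarrow> (\<forall>A B e. set_mset B \<subseteq> D \<and> A \<subseteq># B \<and> e \<in> D \<longrightarrow>
      F (add_mset e B) - F B \<le> F (add_mset e A) - F A)"

datatype mode = BO | LSE real

definition pts :: "(nat \<Rightarrow> 'b) \<Rightarrow> nat \<Rightarrow> 'b list" where
  "pts x t = map x [1..<Suc t]"

definition tru_score ::
  "('a \<Rightarrow> 'a \<Rightarrow> real) \<Rightarrow> ('a \<Rightarrow> real) \<Rightarrow> ('a \<Rightarrow> real) \<Rightarrow> real \<Rightarrow> real \<Rightarrow> 'a set \<Rightarrow> 'a list \<Rightarrow> 'a \<Rightarrow> real" where
  "tru_score k s2 c b e M xs z =
     (1 / c z) * ((\<Sum>xb\<in>M. max (b * post_var k s2 xs xb) (e\<^sup>2))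
                - (\<Sum>xb\<in>M. max (b * post_var_ms k s2 xs {#z#} xb) (e\<^sup>2)))"

definition ucb :: "('a \<Rightarrow> 'a \<Rightarrow> real) \<Rightarrow> ('a \<Rightarrow> real) \<Rightarrow> real \<Rightarrow> 'a list \<Rightarrow> real list \<Rightarrow> 'a \<Rightarrow> real" where
  "ucb k s2 b xs ys z = post_mean k s2 xs ys z + sqrt b * sqrt (post_var k s2 xs z)"

definition lcb :: "('a \<Rightarrow> 'a \<Rightarrow> real) \<Rightarrow> ('a \<Rightarrow> real) \<Rightarrow> real \<Rightarrow> 'a list \<Rightarrow> real list \<Rightarrow> 'a \<Rightarrow> real" where
  "lcb k s2 b xs ys z = post_mean k s2 xs ys z - sqrt b * sqrt (post_var k s2 xs z)"

definition update_M :: "mode \<Rightarrow> 'a set \<Rightarrow> ('a \<Rightarrow> real) \<Rightarrow> ('a \<Rightarrow> real) \<Rightarrow> 'a set" where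
  "update_M md Mprev u l = (case md of
      BO \<Rightarrow> {z \<in> Mprev. u z \<ge> Max (l ` Mprev)}
    | LSE h \<Rightarrow> {z \<in> Mprev. u z \<ge> h \<and> l z \<le> h})"

definition loop_cond ::
  "('a \<Rightarrow> 'a \<Rightarrow> real) \<Rightarrow> ('a \<Rightarrow> real) \<Rightarrow> real \<Rightarrow> real \<Rightarrow> real \<Rightarrow> 'a set \<Rightarrow> 'a list \<Rightarrow> bool" where
  "loop_cond k s2 \<delta> b e M xs \<longleftrightarrow> (\<forall>z\<in>M. sqrt b * sqrt (post_var k s2 xs z) \<le> (1 + \<delta>) * e)"

text \<open>A run of TruVaR. ep t is the epoch index in effect when x_t is chosen,
  eta i = eta_(i), M t = M_t, y an arbitrary sequence of observed values.\<close>
definition truvar_run ::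
  "'a set \<Rightarrow> ('a \<Rightarrow> 'a \<Rightarrow> real) \<Rightarrow> ('a \<Rightarrow> real) \<Rightarrow> ('a \<Rightarrow> real) \<Rightarrow> real \<Rightarrow> real \<Rightarrow> real
   \<Rightarrow> (nat \<Rightarrow> real) \<Rightarrow> mode \<Rightarrow> (nat \<Rightarrow> 'a) \<Rightarrow> (nat \<Rightarrow> real) \<Rightarrow> (nat \<Rightarrow> nat) \<Rightarrow> (nat \<Rightarrow> real)
   \<Rightarrow> (nat \<Rightarrow> 'a set) \<Rightarrow> bool" where
  "truvar_run D k s2 c \<delta> r \<eta>1 \<beta> md x y ep \<eta> M \<longleftrightarrow>
     \<eta> 1 = \<eta>1 \<and> (\<forall>i\<ge>1. \<eta> (Suc i) = r * \<eta> i) \<and> ep 1 = 1 \<and> M 0 = D \<and>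
     (\<forall>t\<ge>1.
        x t \<in> D \<and>
        (\<forall>z\<in>D. tru_score k s2 c (\<beta> (ep t)) (\<eta> (ep t)) (M (t - 1)) (pts x (t - 1)) z
               \<le> tru_score k s2 c (\<beta> (ep t)) (\<eta> (ep t)) (M (t - 1)) (pts x (t - 1)) (x t)) \<and>
        M t = update_M md (M (t - 1))
                (ucb k s2 (\<beta> (ep t)) (pts x t) (pts y t))
                (lcb k s2 (\<beta> (ep t)) (pts x t) (pts y t)) \<and>
        ep t \<le> ep (Suc t) \<and>
        (\<forall>j. ep t \<le> j \<and> j < ep (Suc t) \<longrightarrow> loop_cond k s2 \<delta> (\<beta> j) (\<eta> j) (M t) (pts x t)) \<and>
        \<not> loop_cond k s2 \<delta> (\<beta> (ep (Suc t))) (\<eta> (ep (Suc t))) (M t) (pts x t))"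

text \<open>g_s(S) and g_{s,max}, with M = M_{s-1}, xs = x_1..x_{s-1}, th = eta_(i)^2/beta_(i).\<close>
definition g_fun :: "('a \<Rightarrow> 'a \<Rightarrow> real) \<Rightarrow> ('a \<Rightarrow> real) \<Rightarrow> 'a set \<Rightarrow> 'a list \<Rightarrow> real \<Rightarrow> 'a multiset \<Rightarrow> real" where
  "g_fun k s2 M xs th S = (\<Sum>xb\<in>M. max (post_var k s2 xs xb) th) - (\<Sum>xb\<in>M. max (post_var_ms k s2 xs S xb) th)"

definition g_max :: "('a \<Rightarrow> 'a \<Rightarrow> real) \<Rightarrow> ('a \<Rightarrow> real) \<Rightarrow> 'a set \<Rightarrow> 'a list \<Rightarrow> real \<Rightarrow> real" where
  "g_max k s2 M xs th = (\<Sum>xb\<in>M. max 0 (post_var k s2 xs xb - th))"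

end

theory Submission
  imports Defs "Jordan_Normal_Form.Determinant"
begin

text \<open>
  Subadditivity makes the greedy step pay off. Each summand of \<open>g\<^sub>t(S)\<close> is the truncated
  gain \<open>max s \<theta> - max (s - u) \<theta>\<close>, which is monotone and subadditive in the variance
  reduction \<open>u \<ge> 0\<close>; the variance reduction itself is subadditive over \<open>S\<close> by submodularity.
  Hence \<open>g\<^sub>t,max = g\<^sub>t(S\<^sup>*) \<le> \<Sum>z\<in>S\<^sup>*. g\<^sub>t({z}) \<le> c(S\<^sup>*) g\<^sub>t({x\<^sub>t}) / c(x\<^sub>t)\<close>, the last step because
  \<open>x\<^sub>t\<close> maximises the cost-normalised score \<open>g\<^sub>t({z}) / c(z)\<close>. On the other hand
  \<open>g\<^sub>t\<^sub>+\<^sub>1,max \<le> g\<^sub>t,max - g\<^sub>t({x\<^sub>t})\<close>, since \<open>M\<^sub>t \<subseteq> M\<^sub>t\<^sub>-\<^sub>1\<close> and the posterior after step \<open>t\<close> is the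
  one conditioned additionally on \<open>x\<^sub>t\<close>.
\<close>

lemma gram_noise_quadratic_form:
  assumes w: "w \<in> carrier_vec (length ys)"
  shows "w \<bullet> (gram_noise k s2 ys *\<^sub>v w) =
    (\<Sum>i<length ys. \<Sum>j<length ys. w$i * w$j * k (ys!i) (ys!j)) + (\<Sum>i<length ys. (w$i)\<^sup>2 * s2 (ys!i))"
proof -
  let ?n = "length ys"
  have "w \<bullet> (gram_noise k s2 ys *\<^sub>v w) =
      (\<Sum>i<?n. w$i * (\<Sum>j<?n. (k (ys!i) (ys!j) + (if i = j then s2 (ys!i) else 0)) * w$j))"
    using w unfolding scalar_prod_def mult_mat_vec_def gram_noise_def
    by (auto simp: row_def lessThan_atLeast0 intro!: sum.cong)
  also have "\<dots> = (\<Sum>i<?n. \<Sum>j<?n. w$i * w$j * k (ys!i) (ys!j))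
      + (\<Sum>i<?n. \<Sum>j<?n. w$i * w$j * (if i = j then s2 (ys!i) else 0))"
    by (simp add: sum_distrib_left algebra_simps sum.distrib)
  also have "(\<Sum>i<?n. \<Sum>j<?n. w$i * w$j * (if i = j then s2 (ys!i) else 0)) = (\<Sum>i<?n. (w$i)\<^sup>2 * s2 (ys!i))"
    by (auto simp: power2_eq_square if_distrib cong: if_cong intro!: sum.cong)
  finally show ?thesis .
qed

lemma gram_noise_quadratic_form_ge:
  assumes "psd_kernel_on D k" and "set ys \<subseteq> D" and w: "w \<in> carrier_vec (length ys)"
  shows "(\<Sum>i<length ys. (w$i)\<^sup>2 * s2 (ys!i)) \<le> w \<bullet> (gram_noise k s2 ys *\<^sub>v w)"
proof -
  have "0 \<le> (\<Sum>i<length ys. \<Sum>j<length ys. (\<lambda>i. w$i) i * (\<lambda>i. w$i) j * k (ys!i) (ys!j))"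
    using assms unfolding psd_kernel_on_def by blast
  then show ?thesis using gram_noise_quadratic_form[OF w] by simp
qed

lemma noise_weighted_square_nonneg:
  fixes s2 :: "'a \<Rightarrow> real"
  assumes "\<forall>z\<in>D. s2 z > 0" and "set ys \<subseteq> D" and "i < length ys"
  shows "0 \<le> (w$i)\<^sup>2 * s2 (ys!i)"
proof -
  have "ys ! i \<in> set ys" using assms(3) by simp
  with assms(1,2) have "0 < s2 (ys ! i)" by blast
  then show ?thesis by (simp add: mult_nonneg_nonneg less_imp_le)
qed

lemma noise_weighted_sum_squares_nonneg:
  fixes s2 :: "'a \<Rightarrow> real"
  assumes "\<forall>z\<in>D. s2 z > 0" and "set ys \<subseteq> D"
  shows "0 \<le> (\<Sum>i<length ys. (w$i)\<^sup>2 * s2 (ys!i))"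
  using noise_weighted_square_nonneg[OF assms] by (auto intro!: sum_nonneg)

lemma gram_noise_mult_vec_eq_0:
  assumes kern: "psd_kernel_on D k" and noise: "\<forall>z\<in>D. s2 z > 0" and ys: "set ys \<subseteq> D"
    and v: "v \<in> carrier_vec (length ys)" and Av: "gram_noise k s2 ys *\<^sub>v v = 0\<^sub>v (length ys)"
  shows "v = 0\<^sub>v (length ys)"
proof (rule eq_vecI)
  let ?n = "length ys"
  have "(\<Sum>i<?n. (v$i)\<^sup>2 * s2 (ys!i)) \<le> v \<bullet> (gram_noise k s2 ys *\<^sub>v v)"
    by (rule gram_noise_quadratic_form_ge[OF kern ys v])
  also have "\<dots> = 0" using Av v by simp
  finally have zero: "(\<Sum>i<?n. (v$i)\<^sup>2 * s2 (ys!i)) = 0"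
    using noise_weighted_sum_squares_nonneg[OF noise ys] by (meson order_antisym)
  fix i assume i: "i < dim_vec (0\<^sub>v ?n)"
  then have "ys ! i \<in> set ys" by simp
  with ys have "ys ! i \<in> D" by blast
  then have pos: "s2 (ys!i) > 0" using noise by blast
  have "(v$i)\<^sup>2 * s2 (ys!i) = 0"
    using zero i
    by (subst (asm) sum_nonneg_eq_0_iff) (auto intro: noise_weighted_square_nonneg[OF noise ys])
  then show "v $ i = 0\<^sub>v ?n $ i" using pos i by simp
qed (use v in simp)

lemma gram_noise_invertible:
  assumes "psd_kernel_on D k" and "\<forall>z\<in>D. s2 z > 0" and "set ys \<subseteq> D"
  obtains B where "mat_inverse (gram_noise k s2 ys) = Some B"
    and "gram_noise k s2 ys * B = 1\<^sub>m (length ys)" and "B \<in> carrier_mat (length ys) (length ys)"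
proof -
  let ?n = "length ys" let ?A = "gram_noise k s2 ys"
  have A: "?A \<in> carrier_mat ?n ?n" unfolding gram_noise_def by simp
  have "det ?A \<noteq> 0"
    using det_0_iff_vec_prod_zero[OF A] gram_noise_mult_vec_eq_0[OF assms] by blast
  then have "?A \<in> Units (ring_mat TYPE(real) ?n undefined)" by (rule det_non_zero_imp_unit[OF A])
  then obtain B where "mat_inverse ?A = Some B"
    using mat_inverse(1)[OF A, of undefined] by (cases "mat_inverse ?A") auto
  with mat_inverse(2)[OF A] that show ?thesis by blast
qed

lemma post_var_le_prior:
  assumes kern: "psd_kernel_on D k" and noise: "\<forall>z\<in>D. s2 z > 0" and ys: "set ys \<subseteq> D"
  shows "post_var k s2 ys z \<le> k z z"
proof -
  let ?n = "length ys" let ?A = "gram_noise k s2 ys" let ?kv = "kvec k ys z"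
  obtain B where B: "mat_inverse ?A = Some B" "?A * B = 1\<^sub>m ?n" "B \<in> carrier_mat ?n ?n"
    using gram_noise_invertible[OF kern noise ys] .
  have A: "?A \<in> carrier_mat ?n ?n" unfolding gram_noise_def by simp
  have kv: "?kv \<in> carrier_vec ?n" unfolding kvec_def by simp
  define w where "w = B *\<^sub>v ?kv"
  have w: "w \<in> carrier_vec ?n" using B(3) kv unfolding w_def by simp
  have "?A *\<^sub>v w = ?kv"
    unfolding w_def using assoc_mult_mat_vec[OF A B(3) kv, symmetric] B(2) kv by simp
  then have "?kv \<bullet> w = w \<bullet> (?A *\<^sub>v w)" using comm_scalar_prod[OF w kv] by simp
  also have "\<dots> \<ge> 0"
  proof -
    have "(\<Sum>i<?n. (w$i)\<^sup>2 * s2 (ys!i)) \<le> w \<bullet> (?A *\<^sub>v w)"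
      by (rule gram_noise_quadratic_form_ge[OF kern ys w])
    with noise_weighted_sum_squares_nonneg[OF noise ys, where w = w] show ?thesis by linarith
  qed
  finally show ?thesis unfolding post_var_def B(1) w_def by simp
qed

lemma mset_some_mset: "mset (SOME ys. mset ys = S) = S"
  by (rule someI_ex) (use ex_mset in auto)

lemma post_var_ms_empty: "post_var_ms k s2 xs {#} = post_var k s2 xs"
  using mset_some_mset[of "{#}"] by (simp add: post_var_ms_def fun_eq_iff)

lemma post_var_ms_singleton: "post_var_ms k s2 xs {#z#} = post_var k s2 (xs @ [z])"
proof -
  have "mset (SOME ys. mset ys = {#z#}) = {#z#}" by (rule mset_some_mset)
  then have "(SOME ys. mset ys = {#z#}) = [z]" by (cases "SOME ys. mset ys = {#z#}") auto
  then show ?thesis by (simp add: post_var_ms_def fun_eq_iff)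
qed

lemma post_var_ms_le_prior:
  assumes "psd_kernel_on D k" and "\<forall>z\<in>D. s2 z > 0" and "set xs \<subseteq> D" and "set_mset S \<subseteq> D"
  shows "post_var_ms k s2 xs S z \<le> k z z"
proof -
  have "set (xs @ (SOME ys. mset ys = S)) \<subseteq> D"
    using assms(3,4) by (metis mset_some_mset set_append set_mset_mset Un_least)
  from post_var_le_prior[OF assms(1,2) this] show ?thesis unfolding post_var_ms_def .
qed

lemma submodular_ms_subadditive:
  assumes sm: "submodular_ms D F" and F0: "F {#} = 0" and S: "set_mset S \<subseteq> D"
  shows "F S \<le> (\<Sum>z\<in>#S. F {#z#})"
  using S
proof (induction S)
  case empty
  then show ?case using F0 by simp
next
  case (add e S)
  have "F (add_mset e S) - F S \<le> F (add_mset e {#}) - F {#}"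
    using sm add.prems unfolding submodular_ms_def by auto
  then show ?case using add F0 by simp
qed

lemma submodular_ms_replicate_le:
  assumes sm: "submodular_ms D F" and F0: "F {#} = 0" and e: "e \<in> D"
  shows "F (replicate_mset n e) \<le> real n * F {#e#}"
proof (induction n)
  case 0
  then show ?case using F0 by simp
next
  case (Suc n)
  have "F (add_mset e (replicate_mset n e)) - F (replicate_mset n e) \<le> F (add_mset e {#}) - F {#}"
    using sm e unfolding submodular_ms_def by auto
  then show ?case using Suc F0 by (simp add: algebra_simps)
qed

lemma submodular_ms_singleton_nonneg:
  assumes sm: "submodular_ms D F" and F0: "F {#} = 0" and e: "e \<in> D"
    and bdd: "\<And>n. L \<le> F (replicate_mset n e)"
  shows "0 \<le> F {#e#}"
proof (rule ccontr)
  assume "\<not> 0 \<le> F {#e#}"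
  then have "0 < - F {#e#}" by simp
  then obtain n where n: "- L < real n * (- F {#e#})" using reals_Archimedean3 by blast
  have "L \<le> real n * F {#e#}" using bdd[of n] submodular_ms_replicate_le[OF sm F0 e, of n] by linarith
  with n show False by simp
qed

definition trunc_gain :: "real \<Rightarrow> real \<Rightarrow> real \<Rightarrow> real" where
  "trunc_gain \<theta> s u = max s \<theta> - max (s - u) \<theta>"

lemma trunc_gain_mono: "u \<le> v \<Longrightarrow> trunc_gain \<theta> s u \<le> trunc_gain \<theta> s v"
  unfolding trunc_gain_def by (auto simp: max_def)

lemma trunc_gain_nonneg: "0 \<le> u \<Longrightarrow> 0 \<le> trunc_gain \<theta> s u"
  unfolding trunc_gain_def by (auto simp: max_def)

lemma trunc_gain_add_le:
  "0 \<le> u \<Longrightarrow> 0 \<le> v \<Longrightarrow> trunc_gain \<theta> s (u + v) \<le> trunc_gain \<theta> s u + trunc_gain \<theta> s v"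
  unfolding trunc_gain_def by (auto simp: max_def)

lemma trunc_gain_sum_mset_le:
  assumes "\<forall>z\<in>#S. 0 \<le> f z"
  shows "trunc_gain \<theta> s (\<Sum>z\<in>#S. f z) \<le> (\<Sum>z\<in>#S. trunc_gain \<theta> s (f z))"
  using assms
proof (induction S)
  case empty
  then show ?case by (simp add: trunc_gain_def)
next
  case (add e S)
  have "0 \<le> (\<Sum>z\<in>#S. f z)" using add.prems sum_mset_mono[of S "\<lambda>_. 0" f] by simp
  then have "trunc_gain \<theta> s (f e + (\<Sum>z\<in>#S. f z)) \<le> trunc_gain \<theta> s (f e) + trunc_gain \<theta> s (\<Sum>z\<in>#S. f z)"
    using add.prems by (intro trunc_gain_add_le) auto
  then show ?case using add by simp
qed

definition var_reduction :: "('a \<Rightarrow> 'a \<Rightarrow> real) \<Rightarrow> ('a \<Rightarrow> real) \<Rightarrow> 'a list \<Rightarrow> 'a \<Rightarrow> 'a multiset \<Rightarrow> real" where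
  "var_reduction k s2 xs z S = post_var k s2 xs z - post_var_ms k s2 xs S z"

lemma var_reduction_empty: "var_reduction k s2 xs z {#} = 0"
  by (simp add: var_reduction_def post_var_ms_empty)

text \<open>Submodularity bounds the gain of \<open>n\<close> copies of \<open>e\<close> by \<open>n\<close> times the gain of one copy,
  while the gain is bounded below because the posterior variance never exceeds the prior one.\<close>
lemma var_reduction_singleton_nonneg:
  assumes kern: "psd_kernel_on D k" and noise: "\<forall>z\<in>D. s2 z > 0" and xs: "set xs \<subseteq> D"
    and sm: "submodular_ms D (var_reduction k s2 xs xb)" and e: "e \<in> D"
  shows "0 \<le> var_reduction k s2 xs xb {#e#}"
proof (rule submodular_ms_singleton_nonneg[OF sm var_reduction_empty e])
  fix n
  have "set_mset (replicate_mset n e) \<subseteq> D" using e by auto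
  from post_var_ms_le_prior[OF kern noise xs this]
  show "post_var k s2 xs xb - k xb xb \<le> var_reduction k s2 xs xb (replicate_mset n e)"
    unfolding var_reduction_def by (simp add: algebra_simps)
qed

lemma trunc_var_reduction_le_sum_singletons:
  assumes kern: "psd_kernel_on D k" and noise: "\<forall>z\<in>D. s2 z > 0" and xs: "set xs \<subseteq> D"
    and sm: "submodular_ms D (var_reduction k s2 xs xb)" and S: "set_mset S \<subseteq> D"
  shows "trunc_gain \<theta> s (var_reduction k s2 xs xb S)
      \<le> (\<Sum>z\<in>#S. trunc_gain \<theta> s (var_reduction k s2 xs xb {#z#}))"
proof -
  have "trunc_gain \<theta> s (var_reduction k s2 xs xb S)
      \<le> trunc_gain \<theta> s (\<Sum>z\<in>#S. var_reduction k s2 xs xb {#z#})"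
    by (intro trunc_gain_mono submodular_ms_subadditive[OF sm var_reduction_empty S])
  also have "\<dots> \<le> (\<Sum>z\<in>#S. trunc_gain \<theta> s (var_reduction k s2 xs xb {#z#}))"
    using S by (intro trunc_gain_sum_mset_le) (auto intro: var_reduction_singleton_nonneg[OF kern noise xs sm])
  finally show ?thesis .
qed

lemma g_fun_eq_sum_trunc_gain:
  "g_fun k s2 M xs \<theta> S = (\<Sum>xb\<in>M. trunc_gain \<theta> (post_var k s2 xs xb) (var_reduction k s2 xs xb S))"
  unfolding g_fun_def trunc_gain_def var_reduction_def by (simp add: sum_subtractf)

lemma g_fun_le_sum_singletons:
  assumes kern: "psd_kernel_on D k" and noise: "\<forall>z\<in>D. s2 z > 0" and xs: "set xs \<subseteq> D"
    and sm: "\<forall>xb\<in>M. submodular_ms D (var_reduction k s2 xs xb)" and S: "set_mset S \<subseteq> D"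
  shows "g_fun k s2 M xs \<theta> S \<le> (\<Sum>z\<in>#S. g_fun k s2 M xs \<theta> {#z#})"
proof -
  have "g_fun k s2 M xs \<theta> S
      \<le> (\<Sum>xb\<in>M. \<Sum>z\<in>#S. trunc_gain \<theta> (post_var k s2 xs xb) (var_reduction k s2 xs xb {#z#}))"
    unfolding g_fun_eq_sum_trunc_gain using sm
    by (intro sum_mono trunc_var_reduction_le_sum_singletons[OF kern noise xs _ S]) auto
  also have "\<dots> = (\<Sum>z\<in>#S. g_fun k s2 M xs \<theta> {#z#})"
    unfolding g_fun_eq_sum_trunc_gain by (induction S) (auto simp: sum.distrib)
  finally show ?thesis .
qed

lemma g_fun_singleton_nonneg:
  assumes kern: "psd_kernel_on D k" and noise: "\<forall>z\<in>D. s2 z > 0" and xs: "set xs \<subseteq> D"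
    and sm: "\<forall>xb\<in>M. submodular_ms D (var_reduction k s2 xs xb)" and e: "e \<in> D"
  shows "0 \<le> g_fun k s2 M xs \<theta> {#e#}"
  unfolding g_fun_eq_sum_trunc_gain using sm
  by (intro sum_nonneg trunc_gain_nonneg var_reduction_singleton_nonneg[OF kern noise xs _ e]) auto

lemma g_max_append_le:
  assumes "finite M" and "M' \<subseteq> M"
  shows "g_max k s2 M' (xs @ [z]) \<theta> \<le> g_max k s2 M xs \<theta> - g_fun k s2 M xs \<theta> {#z#}"
proof -
  have "g_max k s2 M' (xs @ [z]) \<theta> \<le> g_max k s2 M (xs @ [z]) \<theta>"
    unfolding g_max_def using assms by (intro sum_mono2) auto
  also have "\<dots> = g_max k s2 M xs \<theta> - g_fun k s2 M xs \<theta> {#z#}"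
    unfolding g_max_def g_fun_def post_var_ms_singleton sum_subtractf[symmetric]
    by (rule sum.cong) (auto simp: max_def)
  finally show ?thesis .
qed

lemma sum_mset_le_mcost_mult:
  assumes "\<forall>z\<in>#S. c z > 0" and "\<forall>z\<in>#S. f z / c z \<le> \<rho>"
  shows "(\<Sum>z\<in>#S. f z) \<le> mcost c S * \<rho>"
proof -
  have "(\<Sum>z\<in>#S. f z) \<le> (\<Sum>z\<in>#S. c z * \<rho>)"
    using assms by (intro sum_mset_mono) (simp add: pos_divide_le_eq mult.commute)
  then show ?thesis unfolding mcost_def sum_mset_distrib_right .
qed

lemma greedy_contraction:
  fixes G Gx Gnext C cx :: real
  assumes "0 < G" and "0 < cx" and "0 \<le> Gx"
    and cover: "G \<le> C * (Gx / cx)" and step: "Gnext \<le> G - Gx"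
  shows "Gnext \<le> (1 - cx / C) * G"
proof -
  have "0 < C * (Gx / cx)" using assms(1) cover by linarith
  moreover have "0 \<le> Gx / cx" using assms(2,3) by simp
  ultimately have "0 < C" by (metis mult_nonpos_nonneg not_less)
  then have "cx / C * G \<le> Gx" using cover assms(2) by (simp add: field_simps)
  then show ?thesis using step by (simp add: algebra_simps)
qed

lemma tru_score_eq_g_fun:
  assumes "b > 0"
  shows "tru_score k s2 c b e M xs z = b * (g_fun k s2 M xs (e\<^sup>2 / b) {#z#} / c z)"
proof -
  have "max (b * u) (e\<^sup>2) = b * max u (e\<^sup>2 / b)" for u
    using assms by (simp add: max_def field_simps)
  then show ?thesis
    unfolding tru_score_def g_fun_def by (simp add: sum_distrib_left[symmetric] right_diff_distrib diff_divide_distrib)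
qed

lemma pts_Suc: "pts x (Suc t) = pts x t @ [x (Suc t)]"
  by (simp add: pts_def)

lemma truvar_run_pts_subset:
  "truvar_run D k s2 c \<delta> r \<eta>1 \<beta> md x y ep \<eta> M \<Longrightarrow> set (pts x t) \<subseteq> D"
  unfolding truvar_run_def pts_def by auto

lemma truvar_run_epoch_pos:
  assumes run: "truvar_run D k s2 c \<delta> r \<eta>1 \<beta> md x y ep \<eta> M" and "t \<ge> 1"
  shows "ep t \<ge> 1"
  using \<open>t \<ge> 1\<close>
proof (induction t rule: dec_induct)
  case base
  then show ?case using run unfolding truvar_run_def by simp
next
  case (step n)
  then show ?case using run unfolding truvar_run_def by (meson order_trans)
qed

lemma truvar_run_M_Suc_subset:
  "truvar_run D k s2 c \<delta> r \<eta>1 \<beta> md x y ep \<eta> M \<Longrightarrow> M (Suc t) \<subseteq> M t"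
  unfolding truvar_run_def update_M_def by (cases md) auto

lemma truvar_run_M_subset:
  assumes "truvar_run D k s2 c \<delta> r \<eta>1 \<beta> md x y ep \<eta> M"
  shows "M t \<subseteq> D"
proof (induction t)
  case 0
  then show ?case using assms unfolding truvar_run_def by simp
next
  case (Suc t)
  then show ?case using truvar_run_M_Suc_subset[OF assms, of t] by simp
qed

lemma truvar_run_greedy:
  assumes run: "truvar_run D k s2 c \<delta> r \<eta>1 \<beta> md x y ep \<eta> M"
    and b: "\<beta> (ep (Suc t)) > 0" and z: "z \<in> D"
  defines "\<theta> \<equiv> (\<eta> (ep (Suc t)))\<^sup>2 / \<beta> (ep (Suc t))"
  shows "g_fun k s2 (M t) (pts x t) \<theta> {#z#} / c z
       \<le> g_fun k s2 (M t) (pts x t) \<theta> {#x (Suc t)#} / c (x (Suc t))"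
proof -
  have "tru_score k s2 c (\<beta> (ep (Suc t))) (\<eta> (ep (Suc t))) (M t) (pts x t) z
      \<le> tru_score k s2 c (\<beta> (ep (Suc t))) (\<eta> (ep (Suc t))) (M t) (pts x t) (x (Suc t))"
    using run z unfolding truvar_run_def by (metis diff_Suc_1 le_add1 plus_1_eq_Suc)
  then show ?thesis
    unfolding tru_score_eq_g_fun[OF b] \<theta>_def by (rule mult_le_cancel_left_pos[OF b, THEN iffD1])
qed

theorem mainTheorem5:
  fixes D :: "'a set" and k :: "'a \<Rightarrow> 'a \<Rightarrow> real" and s2 c :: "'a \<Rightarrow> real"
    and \<delta> r \<eta>1 :: real and \<beta> :: "nat \<Rightarrow> real" and md :: mode
    and x :: "nat \<Rightarrow> 'a" and y :: "nat \<Rightarrow> real" and ep :: "nat \<Rightarrow> nat"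
    and \<eta> :: "nat \<Rightarrow> real" and M :: "nat \<Rightarrow> 'a set"
    and t :: nat and S :: "'a multiset"
  assumes finD: "finite D"
    and kern: "psd_kernel_on D k"
    and kdiag: "\<forall>z\<in>D. k z z = 1"
    and noise: "\<forall>z\<in>D. s2 z > 0"
    and cost: "\<forall>z\<in>D. c z > 0"
    and params: "\<delta> > 0" "0 < r" "r < 1" "\<eta>1 > 0" "\<forall>i\<ge>1. \<beta> i > 0"
    and submod: "\<forall>xs. set xs \<subseteq> D \<longrightarrow>
        (\<forall>z\<in>D. submodular_ms D (\<lambda>S'. post_var k s2 xs z - post_var_ms k s2 xs S' z))"
    and run: "truvar_run D k s2 c \<delta> r \<eta>1 \<beta> md x y ep \<eta> M"
    and t1: "t \<ge> 1"
    and same_epoch: "ep (Suc t) = ep t"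
    and gpos: "g_max k s2 (M (t - 1)) (pts x (t - 1)) ((\<eta> (ep t))\<^sup>2 / \<beta> (ep t)) > 0"
    and SD: "set_mset S \<subseteq> D"
    and Sopt: "g_fun k s2 (M (t - 1)) (pts x (t - 1)) ((\<eta> (ep t))\<^sup>2 / \<beta> (ep t)) S
               = g_max k s2 (M (t - 1)) (pts x (t - 1)) ((\<eta> (ep t))\<^sup>2 / \<beta> (ep t))"
    and Smin: "\<forall>S'. set_mset S' \<subseteq> D \<and>
               g_fun k s2 (M (t - 1)) (pts x (t - 1)) ((\<eta> (ep t))\<^sup>2 / \<beta> (ep t)) S'
                 = g_max k s2 (M (t - 1)) (pts x (t - 1)) ((\<eta> (ep t))\<^sup>2 / \<beta> (ep t))
               \<longrightarrow> mcost c S \<le> mcost c S'"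
  shows "g_max k s2 (M t) (pts x t) ((\<eta> (ep t))\<^sup>2 / \<beta> (ep t))
         \<le> (1 - c (x t) / mcost c S) * g_max k s2 (M (t - 1)) (pts x (t - 1)) ((\<eta> (ep t))\<^sup>2 / \<beta> (ep t))"
proof -
  obtain n where t: "t = Suc n" using t1 by (cases t) auto
  define \<theta> where "\<theta> = (\<eta> (ep t))\<^sup>2 / \<beta> (ep t)"
  let ?g = "g_fun k s2 (M n) (pts x n) \<theta>"
  have xs: "set (pts x n) \<subseteq> D" by (rule truvar_run_pts_subset[OF run])
  have Mn: "M n \<subseteq> D" by (rule truvar_run_M_subset[OF run])
  have xt: "x t \<in> D" using run t1 unfolding truvar_run_def by blast
  have b: "\<beta> (ep t) > 0" using params(5) truvar_run_epoch_pos[OF run t1] by blast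
  have sm: "\<forall>xb\<in>M n. submodular_ms D (var_reduction k s2 (pts x n) xb)"
    using submod xs Mn unfolding var_reduction_def by (auto simp: fun_eq_iff)
  have "g_max k s2 (M n) (pts x n) \<theta> = ?g S" using Sopt t \<theta>_def by simp
  also have "\<dots> \<le> (\<Sum>z\<in>#S. ?g {#z#})" by (rule g_fun_le_sum_singletons[OF kern noise xs sm SD])
  also have "\<dots> \<le> mcost c S * (?g {#x t#} / c (x t))"
    using SD cost truvar_run_greedy[OF run] b t \<theta>_def by (intro sum_mset_le_mcost_mult) auto
  finally have cover: "g_max k s2 (M n) (pts x n) \<theta> \<le> mcost c S * (?g {#x t#} / c (x t))" .
  have step: "g_max k s2 (M t) (pts x t) \<theta> \<le> g_max k s2 (M n) (pts x n) \<theta> - ?g {#x t#}"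
    unfolding t pts_Suc
    by (intro g_max_append_le finite_subset[OF Mn finD] truvar_run_M_Suc_subset[OF run])
  show ?thesis
    using greedy_contraction[OF _ _ g_fun_singleton_nonneg[OF kern noise xs sm xt] cover step]
      gpos cost xt t \<theta>_def by simp
qed

end
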